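(* Let $n,k\geq 1$ and let ${\bf m}=(m_1,\dots,m_k)$ be an array of nonnegative integers. For every permutation $\tau\in\mathfrak{S}_k$ there exists a bijection $\mathfrak{a}\mapsto\mathfrak{b}$ from $\mathcal{A}_n^k({\bf m})$ onto $\mathcal{A}_n^k({\bf m}')$, where ${\bf m}'=(m_{\tau(1)},\dots,m_{\tau(k)})$, such that $\mathrm{DEZ}(\mathfrak{a})=\mathrm{DEZ}(\mathfrak{b})$ and $\mathrm{Der}(\mathfrak{a})=\mathrm{Der}(\mathfrak{b})$.
   Context: $\mathfrak{S}_n$ is the set of permutations of $[n]=\{1,\dots,n\}$; $\mathrm{FIX}(\pi)=\{i:\pi(i)=i\}$. For $k\ge1$, a $k$-arrangement of $[n]$ is a pair $\mathfrak{a}=(\pi,\phi)$ with $\pi\in\mathfrak{S}_n$ and $\phi:\mathrm{FIX}(\pi)\to\{-1,\dots,-k\}$ arbitrary; $\mathcal{A}_n^k$ is the set of them. The positive reduction of an integer word replaces every occurrence of its $i$-th smallest positive letter by $i$, for all $i$ (negative letters unchanged). The derangement form $\mathrm{df}_k(\mathfrak{a})$ is obtained from $\pi(1)\cdots\pi(n)$ by replacing $\pi(i)$ with $\phi(i)$ for each $i\in\mathrm{FIX}(\pi)$ and then applying positive reduction. For an integer word $w=w_1\cdots w_n$, $\mathrm{DES}(w)=\{i\in[n-1]:w_i>w_{i+1}\}$, and $\mathrm{Pos}(w)$ is the subword of positive letters. $\mathrm{DEZ}(\mathfrak{a})=\mathrm{DES}(\mathrm{df}_k(\mathfrak{a}))$,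 $\mathrm{Der}(\mathfrak{a})=\mathrm{Pos}(\mathrm{df}_k(\mathfrak{a}))$, $\mathrm{fix}_i(\mathfrak{a})=|\{j\in\mathrm{FIX}(\pi):\phi(j)=-i\}|$, and $\mathcal{A}_n^k({\bf m})=\{\mathfrak{a}\in\mathcal{A}_n^k:\mathrm{fix}_i(\mathfrak{a})=m_i,\ 1\le i\le k\}$. *)

theory Defs
  imports "HOL-Combinatorics.Permutations"
begin

definition FIX :: "nat \<Rightarrow> (nat \<Rightarrow> nat) \<Rightarrow> nat set" where
  "FIX n \<pi> = {i \<in> {1..n}. \<pi> i = i}"

text \<open>k-arrangements of [n]: pairs (pi, phi), pi a permutation of {1..n},
  phi : FIX(pi) -> {-1,...,-k}; phi is normalised to 0 outside FIX(pi)
  so that the pair is uniquely represented.\<close>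
definition arrangements :: "nat \<Rightarrow> nat \<Rightarrow> ((nat \<Rightarrow> nat) \<times> (nat \<Rightarrow> int)) set" where
  "arrangements n k = {(\<pi>, \<phi>). \<pi> permutes {1..n}
      \<and> (\<forall>i \<in> FIX n \<pi>. \<phi> i \<in> {-int k..-1})
      \<and> (\<forall>i. i \<notin> FIX n \<pi> \<longrightarrow> \<phi> i = 0)}"

definition fixcount :: "nat \<Rightarrow> (nat \<Rightarrow> nat) \<times> (nat \<Rightarrow> int) \<Rightarrow> nat \<Rightarrow> nat" where
  "fixcount n a i = card {j \<in> FIX n (fst a). snd a j = - int i}"

definition arrangements_m :: "nat \<Rightarrow> nat \<Rightarrow> (nat \<Rightarrow> nat) \<Rightarrow> ((nat \<Rightarrow> nat) \<times> (nat \<Rightarrow> int)) set" where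
  "arrangements_m n k m = {a \<in> arrangements n k. \<forall>i \<in> {1..k}. fixcount n a i = m i}"

definition pos_red :: "int list \<Rightarrow> int list" where
  "pos_red w = map (\<lambda>x. if x > 0 then int (card {y \<in> set w. 0 < y \<and> y \<le> x}) else x) w"

definition df :: "nat \<Rightarrow> (nat \<Rightarrow> nat) \<times> (nat \<Rightarrow> int) \<Rightarrow> int list" where
  "df n a = pos_red (map (\<lambda>i. if fst a i = i then snd a i else int (fst a i)) [1..<n+1])"

text \<open>Descent set of a word, positions 1-based.\<close>
definition DES :: "int list \<Rightarrow> nat set" where
  "DES w = {i \<in> {1..<length w}. w ! (i - 1) > w ! i}"

definition Pos :: "int list \<Rightarrow> int list" where
  "Pos w = filter (\<lambda>x. x > 0) w"

definition DEZ :: "nat \<Rightarrow> (nat \<Rightarrow> nat) \<times> (nat \<Rightarrow> int) \<Rightarrow> nat set" where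
  "DEZ n a = DES (df n a)"

definition Der :: "nat \<Rightarrow> (nat \<Rightarrow> nat) \<times> (nat \<Rightarrow> int) \<Rightarrow> int list" where
  "Der n a = Pos (df n a)"

end

theory Submission
  imports Defs
begin

(* The bijection keeps pi and changes only the colours phi. DEZ and Der see an arrangement only
   through the word w obtained from pi(1) ... pi(n) by writing phi(i) at the fixed points, i.e. df
   before positive reduction: through its descent set and its positive subword, because positive
   reduction is strictly monotone on the letters of w. The colours are the negative letters of w, so
   it suffices to exchange the multiplicities of two adjacent letters c, c+1 < 0 in a word while
   keeping every other letter in place and the descent set unchanged; such exchanges generate all
   permutations of the colours. The exchange cuts the word at its factors (c+1) c, which carry all
   descents among the letters c and c+1, and replaces each remaining maximal factor c^x (c+1)^y by
   c^y (c+1)^x. It is an involution. *)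

lemma count_list_replicate: "count_list (replicate n x) y = (if x = y then n else 0)"
  by (induction n) auto

fun descents :: "'a::linorder list \<Rightarrow> bool list" where
  "descents (u # v # w) = (v < u) # descents (v # w)"
| "descents _ = []"

lemma descents_Cons: "descents (u # w) = (case w of [] \<Rightarrow> [] | v # _ \<Rightarrow> (v < u) # descents w)"
  by (cases w) auto

lemma descents_Cons_cong:
  assumes "descents w = descents w'" "length w = length w'" "hd w < u \<longleftrightarrow> hd w' < u"
  shows "descents (u # w) = descents (u # w')"
  using assms by (cases w; cases w') (simp_all add: descents_Cons)

lemma descents_append_Cons: "descents (xs @ u # ys) = descents (xs @ [u]) @ descents (u # ys)"
  by (induction xs rule: descents.induct) auto

lemma descents_snoc: "xs \<noteq> [] \<Longrightarrow> descents (xs @ [u]) = descents xs @ [u < last xs]"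
  by (induction xs rule: descents.induct) auto

lemma descents_sorted: "sorted xs \<Longrightarrow> descents xs = replicate (length xs - 1) False"
  by (induction xs rule: descents.induct) auto

lemma nth_descents: "Suc i < length w \<Longrightarrow> descents w ! i = (w ! Suc i < w ! i)"
  by (induction w arbitrary: i rule: descents.induct) (auto simp: nth_Cons split: nat.split)

lemma DES_eq_if_descents_eq:
  assumes "length w = length w'" "descents w = descents w'"
  shows "DES w = DES w'"
proof -
  have "w ! i < w ! (i - 1) \<longleftrightarrow> w' ! i < w' ! (i - 1)" if "i \<in> {1..<length w}" for i
    using nth_descents[of "i - 1" w] nth_descents[of "i - 1" w'] that assms by auto
  then show ?thesis
    using assms(1) by (auto simp: DES_def)
qed

lemma DES_map_strict_mono:
  assumes "strict_mono_on (set w) f"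
  shows "DES (map f w) = DES w"
  using strict_mono_on_less[OF assms] by (auto simp: DES_def)

definition pos_rank :: "int list \<Rightarrow> int \<Rightarrow> int" where
  "pos_rank w x = (if 0 < x then int (card {y \<in> set w. 0 < y \<and> y \<le> x}) else x)"

lemma pos_red_eq_map_pos_rank: "pos_red w = map (pos_rank w) w"
  by (simp add: pos_red_def pos_rank_def)

lemma pos_rank_pos_iff: "x \<in> set w \<Longrightarrow> 0 < pos_rank w x \<longleftrightarrow> 0 < x"
  by (auto simp: pos_rank_def card_gt_0_iff)

lemma strict_mono_on_pos_rank: "strict_mono_on (set w) (pos_rank w)"
proof (rule strict_mono_onI)
  fix x y assume xy: "x \<in> set w" "y \<in> set w" "x < y"
  show "pos_rank w x < pos_rank w y"
  proof (cases "0 < x")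
    case True
    have "{z \<in> set w. 0 < z \<and> z \<le> x} \<subset> {z \<in> set w. 0 < z \<and> z \<le> y}"
    proof
      show "{z \<in> set w. 0 < z \<and> z \<le> x} \<subseteq> {z \<in> set w. 0 < z \<and> z \<le> y}"
        using xy(3) by auto
      have "y \<notin> {z \<in> set w. 0 < z \<and> z \<le> x}" "y \<in> {z \<in> set w. 0 < z \<and> z \<le> y}"
        using xy True by auto
      then show "{z \<in> set w. 0 < z \<and> z \<le> x} \<noteq> {z \<in> set w. 0 < z \<and> z \<le> y}"
        by blast
    qed
    then have "card {z \<in> set w. 0 < z \<and> z \<le> x} < card {z \<in> set w. 0 < z \<and> z \<le> y}"
      by (intro psubset_card_mono) simp_all
    then show ?thesis
      using True xy(3) by (simp add: pos_rank_def)
  next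
    case False
    then have "pos_rank w x = x" by (simp add: pos_rank_def)
    moreover have "x < pos_rank w y"
      using False xy pos_rank_pos_iff[of y w] by (cases "0 < y") (simp_all add: pos_rank_def)
    ultimately show ?thesis by simp
  qed
qed

lemma DES_pos_red: "DES (pos_red w) = DES w"
  by (simp add: pos_red_eq_map_pos_rank DES_map_strict_mono strict_mono_on_pos_rank)

lemma Pos_pos_red: "Pos (pos_red w) = pos_red (Pos w)"
proof -
  have "Pos (pos_red w) = map (pos_rank w) (Pos w)"
    unfolding Pos_def pos_red_eq_map_pos_rank filter_map o_def
    using pos_rank_pos_iff[of _ w] by (metis (mono_tags, lifting) filter_cong)
  also have "\<dots> = map (pos_rank (Pos w)) (Pos w)"
    by (rule map_cong) (auto simp: pos_rank_def Pos_def)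
  finally show ?thesis
    by (simp add: pos_red_eq_map_pos_rank)
qed

definition run :: "int \<Rightarrow> nat \<Rightarrow> nat \<Rightarrow> int list" where
  "run c x y = replicate x c @ replicate y (c + 1)"

(* x and y record the factor c^x (c+1)^y read since the last cut; a letter c arriving when y > 0
   completes the cut (c+1) c. *)
fun letter_swap_scan :: "int \<Rightarrow> nat \<Rightarrow> nat \<Rightarrow> int list \<Rightarrow> int list" where
  "letter_swap_scan c x y [] = run c y x"
| "letter_swap_scan c x y (v # w) =
     (if v = c \<and> y = 0 then letter_swap_scan c (Suc x) 0 w
      else if v = c + 1 then letter_swap_scan c x (Suc y) w
      else if v = c then run c (y - 1) x @ (c + 1) # c # letter_swap_scan c 0 0 w
      else run c y x @ v # letter_swap_scan c 0 0 w)"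

definition letter_swap :: "int \<Rightarrow> int list \<Rightarrow> int list" where
  "letter_swap c w = letter_swap_scan c 0 0 w"

lemma letter_swap_scan_replicate_first:
  "letter_swap_scan c x 0 (replicate i c @ w) = letter_swap_scan c (x + i) 0 w"
  by (induction i arbitrary: x) auto

lemma letter_swap_scan_replicate_second:
  "letter_swap_scan c x y (replicate j (c + 1) @ w) = letter_swap_scan c x (y + j) w"
  by (induction j arbitrary: y) auto

lemma letter_swap_run_append: "letter_swap c (run c x y @ w) = letter_swap_scan c x y w"
  by (simp add: letter_swap_def run_def
      letter_swap_scan_replicate_first letter_swap_scan_replicate_second)

lemma letter_swap_run: "letter_swap c (run c x y) = run c y x"
  using letter_swap_run_append[of c x y "[]"] by simp

lemma letter_swap_run_descent:
  "letter_swap c (run c x y @ (c + 1) # c # w) = run c y x @ (c + 1) # c # letter_swap c w"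
  unfolding letter_swap_run_append by (simp add: letter_swap_def)

lemma letter_swap_run_other:
  "v \<noteq> c \<Longrightarrow> v \<noteq> c + 1 \<Longrightarrow> letter_swap c (run c x y @ v # w) = run c y x @ v # letter_swap c w"
  unfolding letter_swap_run_append by (simp add: letter_swap_def)

lemma run_decomposition:
  "\<exists>x y t. w = run c x y @ t \<and>
     (t = [] \<or> (\<exists>r. t = (c + 1) # c # r) \<or> (\<exists>v r. v \<noteq> c \<and> v \<noteq> c + 1 \<and> t = v # r))"
proof (induction w)
  case Nil
  have "[] = run c 0 0 @ []" by (simp add: run_def)
  then show ?case by blast
next
  case (Cons u w)
  then obtain x y t where w: "w = run c x y @ t"
    and t: "t = [] \<or> (\<exists>r. t = (c + 1) # c # r) \<or> (\<exists>v r. v \<noteq> c \<and> v \<noteq> c + 1 \<and> t = v # r)"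
    by blast
  consider "u = c" | "u = c + 1" "x = 0" | "u = c + 1" "x \<noteq> 0" | "u \<noteq> c" "u \<noteq> c + 1"
    by blast
  then show ?case
  proof cases
    case 1
    then have "u # w = run c (Suc x) y @ t" by (simp add: w run_def)
    then show ?thesis using t by blast
  next
    case 2
    then have "u # w = run c 0 (Suc y) @ t" by (simp add: w run_def)
    then show ?thesis using t by blast
  next
    case 3
    then have "u # w = run c 0 0 @ (c + 1) # c # (run c (x - 1) y @ t)"
      by (cases x) (simp_all add: w run_def)
    then show ?thesis by blast
  next
    case 4
    then have "u # w = run c 0 0 @ u # w" by (simp add: run_def)
    then show ?thesis using 4 by blast
  qed
qed

lemma run_induct [case_names run descent other]:
  assumes run: "\<And>x y. P (run c x y)"
    and descent: "\<And>x y w. P w \<Longrightarrow> P (run c x y @ (c + 1) # c # w)"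
    and other: "\<And>x y v w. v \<noteq> c \<Longrightarrow> v \<noteq> c + 1 \<Longrightarrow> P w \<Longrightarrow> P (run c x y @ v # w)"
  shows "P w"
proof (induction w rule: length_induct)
  case (1 w)
  obtain x y t where w: "w = run c x y @ t"
    and t: "t = [] \<or> (\<exists>r. t = (c + 1) # c # r) \<or> (\<exists>v r. v \<noteq> c \<and> v \<noteq> c + 1 \<and> t = v # r)"
    using run_decomposition by blast
  from t show ?case
  proof (elim disjE exE conjE)
    assume "t = []"
    then show ?case using run w by simp
  next
    fix r assume "t = (c + 1) # c # r"
    then show ?case using descent 1 w by simp
  next
    fix v r assume "v \<noteq> c" "v \<noteq> c + 1" "t = v # r"
    then show ?case using other 1 w by simp
  qed
qed

lemma letter_swap_letter_swap: "letter_swap c (letter_swap c w) = w"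
  by (induction w rule: run_induct[where c = c])
     (simp_all add: letter_swap_run letter_swap_run_descent letter_swap_run_other)

definition collapse :: "int \<Rightarrow> int \<Rightarrow> int" where
  "collapse c u = (if u = c + 1 then c else u)"

lemma collapse_simps:
  "collapse c c = c" "collapse c (c + 1) = c" "v \<noteq> c + 1 \<Longrightarrow> collapse c v = v"
  by (simp_all add: collapse_def)

lemma map_collapse_run: "map (collapse c) (run c x y) = replicate (x + y) c"
  by (simp add: run_def collapse_def replicate_add)

lemma map_collapse_letter_swap: "map (collapse c) (letter_swap c w) = map (collapse c) w"
proof (induction w rule: run_induct[where c = c])
  case (run x y)
  then show ?case by (simp add: letter_swap_run map_collapse_run add.commute[of y])
next
  case (descent x y w)
  then show ?case
    by (simp add: letter_swap_run_descent map_collapse_run add.commute[of y] collapse_simps)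
next
  case (other x y v w)
  then show ?case
    by (simp add: letter_swap_run_other map_collapse_run add.commute[of y] collapse_simps)
qed

lemma length_letter_swap [simp]: "length (letter_swap c w) = length w"
  using map_collapse_letter_swap[of c w] map_eq_imp_length_eq by blast

lemma nth_letter_swap:
  assumes "p < length w"
  shows "w ! p \<noteq> c \<Longrightarrow> w ! p \<noteq> c + 1 \<Longrightarrow> letter_swap c w ! p = w ! p"
    and "w ! p = c \<or> w ! p = c + 1 \<Longrightarrow> letter_swap c w ! p = c \<or> letter_swap c w ! p = c + 1"
proof -
  have "collapse c (letter_swap c w ! p) = collapse c (w ! p)"
    using arg_cong[OF map_collapse_letter_swap[of c w], of "\<lambda>xs. xs ! p"] assms by simp
  then show "w ! p \<noteq> c \<Longrightarrow> w ! p \<noteq> c + 1 \<Longrightarrow> letter_swap c w ! p = w ! p"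
    and "w ! p = c \<or> w ! p = c + 1 \<Longrightarrow> letter_swap c w ! p = c \<or> letter_swap c w ! p = c + 1"
    by (auto simp: collapse_def split: if_splits)
qed

lemma count_list_run:
  "count_list (run c x y) u = (if u = c then x else if u = c + 1 then y else 0)"
  by (simp add: run_def count_list_replicate)

lemma count_list_letter_swap:
  "count_list (letter_swap c w) u = count_list w (Transposition.transpose c (c + 1) u)"
proof (induction w rule: run_induct[where c = c])
  case (run x y)
  then show ?case by (auto simp: letter_swap_run count_list_run transpose_def)
next
  case (descent x y w)
  then show ?case by (simp add: letter_swap_run_descent) (auto simp: count_list_run transpose_def)
next
  case (other x y v w)
  then show ?case by (simp add: letter_swap_run_other) (auto simp: count_list_run transpose_def)
qed

lemma filter_letter_swap:
  assumes "\<not> P c" "\<not> P (c + 1)"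
  shows "filter P (letter_swap c w) = filter P w"
proof (induction w rule: run_induct[where c = c])
  case (run x y)
  then show ?case by (simp add: letter_swap_run) (simp add: run_def assms)
next
  case (descent x y w)
  then show ?case by (simp add: letter_swap_run_descent) (simp add: run_def assms)
next
  case (other x y v w)
  then show ?case by (simp add: letter_swap_run_other) (simp add: run_def assms)
qed

lemma length_run: "length (run c x y) = x + y"
  by (simp add: run_def)

lemma sorted_run: "sorted (run c x y)"
  by (simp add: run_def sorted_append)

lemma descents_run_snoc:
  assumes "v \<noteq> c"
  shows "descents (run c y x @ [v]) = descents (run c x y @ [v])"
proof (cases "x + y = 0")
  case True
  then show ?thesis by (simp add: run_def)
next
  case False
  have "last (run c x y) \<in> {c, c + 1}" "last (run c y x) \<in> {c, c + 1}"
    using False by (auto simp: run_def last_append)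
  then have "v < last (run c y x) \<longleftrightarrow> v < last (run c x y)"
    using assms by auto
  moreover have "run c x y \<noteq> []" "run c y x \<noteq> []"
    using False by (auto simp: run_def)
  ultimately show ?thesis
    by (simp add: descents_snoc descents_sorted sorted_run length_run add.commute)
qed

lemma hd_letter_swap_less_iff:
  assumes "u \<noteq> c + 1"
  shows "hd (letter_swap c w) < u \<longleftrightarrow> hd w < u"
proof (cases "w = []")
  case True
  then show ?thesis by (simp add: letter_swap_def run_def)
next
  case False
  moreover have "letter_swap c w \<noteq> []"
    using False length_letter_swap[of c w] by (metis length_0_conv)
  ultimately have "collapse c (hd (letter_swap c w)) = collapse c (hd w)"
    using arg_cong[OF map_collapse_letter_swap[of c w], of hd] by (simp add: hd_map)
  then show ?thesis
    using assms by (auto simp: collapse_def split: if_splits)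
qed

lemma descents_letter_swap: "descents (letter_swap c w) = descents w"
proof (induction w rule: run_induct[where c = c])
  case (run x y)
  then show ?case by (simp add: letter_swap_run descents_sorted sorted_run length_run add.commute)
next
  case (descent x y w)
  have "sorted (run c x y @ [c + 1])" for x y
    by (simp add: run_def sorted_append)
  then have "descents (run c x y @ [c + 1]) = replicate (x + y) False" for x y
    by (simp add: descents_sorted length_run)
  then show ?case
    using descents_Cons_cong[OF descent length_letter_swap hd_letter_swap_less_iff, of c]
      descents_append_Cons[of "run c y x" "c + 1" "c # letter_swap c w"]
      descents_append_Cons[of "run c x y" "c + 1" "c # w"]
    by (simp only: letter_swap_run_descent) (simp add: add.commute)
next
  case (other x y v w)
  then show ?case
    using descents_Cons_cong[OF other(3) length_letter_swap hd_letter_swap_less_iff[OF other(2)]]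
      descents_run_snoc[OF other(1), of y x]
      descents_append_Cons[of "run c y x" v "letter_swap c w"]
      descents_append_Cons[of "run c x y" v w]
    by (simp add: letter_swap_run_other)
qed

lemma DES_letter_swap: "DES (letter_swap c w) = DES w"
  by (rule DES_eq_if_descents_eq) (simp_all add: descents_letter_swap)

definition raw_df :: "nat \<Rightarrow> (nat \<Rightarrow> nat) \<times> (nat \<Rightarrow> int) \<Rightarrow> int list" where
  "raw_df n a = map (\<lambda>i. if fst a i = i then snd a i else int (fst a i)) [1..<n+1]"

lemma df_eq_pos_red_raw_df: "df n a = pos_red (raw_df n a)"
  by (simp add: df_def raw_df_def)

lemma DEZ_eq_DES_raw_df: "DEZ n a = DES (raw_df n a)"
  by (simp add: DEZ_def df_eq_pos_red_raw_df DES_pos_red)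

lemma Der_eq_pos_red_Pos_raw_df: "Der n a = pos_red (Pos (raw_df n a))"
  by (simp add: Der_def df_eq_pos_red_raw_df Pos_pos_red)

lemma length_raw_df [simp]: "length (raw_df n a) = n"
  by (simp add: raw_df_def)

lemma nth_raw_df:
  "p < n \<Longrightarrow> raw_df n a ! p = (if fst a (Suc p) = Suc p then snd a (Suc p) else int (fst a (Suc p)))"
  by (simp add: raw_df_def nth_upt del: upt_Suc)

lemma fixcount_eq_count_list_raw_df:
  assumes "0 < t"
  shows "fixcount n a t = count_list (raw_df n a) (- int t)"
proof -
  have "{j \<in> FIX n (fst a). snd a j = - int t} =
      {i. (if fst a i = i then snd a i else int (fst a i)) = - int t} \<inter> set [1..<n+1]"
    using assms by (auto simp: FIX_def)
  then show ?thesis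
    by (simp add: fixcount_def raw_df_def count_list_eq_length_filter filter_map o_def
        distinct_length_filter eq_commute[of "- int t"] del: upt_Suc)
qed

definition recolor :: "nat \<Rightarrow> int \<Rightarrow> (nat \<Rightarrow> nat) \<times> (nat \<Rightarrow> int) \<Rightarrow> (nat \<Rightarrow> nat) \<times> (nat \<Rightarrow> int)" where
  "recolor n c a =
     (fst a, \<lambda>j. if j \<in> FIX n (fst a) then letter_swap c (raw_df n a) ! (j - 1) else 0)"

lemma raw_df_recolor:
  assumes "c + 1 < 0"
  shows "raw_df n (recolor n c a) = letter_swap c (raw_df n a)"
proof (rule nth_equalityI)
  fix p assume "p < length (raw_df n (recolor n c a))"
  then have p: "p < n" by simp
  show "raw_df n (recolor n c a) ! p = letter_swap c (raw_df n a) ! p"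
  proof (cases "fst a (Suc p) = Suc p")
    case True
    then show ?thesis using p by (simp add: nth_raw_df recolor_def FIX_def)
  next
    case False
    then have "raw_df n a ! p = int (fst a (Suc p))" using p by (simp add: nth_raw_df)
    then show ?thesis
      using False p assms nth_letter_swap(1)[of p "raw_df n a" c]
      by (simp add: nth_raw_df recolor_def)
  qed
qed simp

lemma recolor_in_arrangements:
  assumes a: "a \<in> arrangements n k" and c: "- int k \<le> c" "c + 1 < 0"
  shows "recolor n c a \<in> arrangements n k"
proof -
  have "letter_swap c (raw_df n a) ! (j - 1) \<in> {- int k..-1}" if j: "j \<in> FIX n (fst a)" for j
  proof -
    obtain p where p: "j = Suc p" "p < n"
      using j by (cases j) (auto simp: FIX_def)
    have "raw_df n a ! p = snd a j" "snd a j \<in> {- int k..-1}"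
      using a j p by (auto simp: nth_raw_df FIX_def arrangements_def)
    then show ?thesis
      using nth_letter_swap[of p "raw_df n a" c] c p
      by (cases "raw_df n a ! p = c \<or> raw_df n a ! p = c + 1") auto
  qed
  then show ?thesis
    using a by (auto simp: arrangements_def recolor_def)
qed

lemma fst_recolor [simp]: "fst (recolor n c a) = fst a"
  by (simp add: recolor_def)

lemma recolor_recolor:
  assumes a: "a \<in> arrangements n k" and c: "c + 1 < 0"
  shows "recolor n c (recolor n c a) = a"
proof -
  have "snd (recolor n c (recolor n c a)) j = snd a j" for j
  proof (cases "j \<in> FIX n (fst a)")
    case True
    then obtain p where p: "j = Suc p" "p < n"
      by (cases j) (auto simp: FIX_def)
    have "snd (recolor n c (recolor n c a)) j = letter_swap c (raw_df n (recolor n c a)) ! p"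
      using True p by (simp add: recolor_def)
    also have "\<dots> = raw_df n a ! p"
      by (simp add: raw_df_recolor[OF c] letter_swap_letter_swap)
    also have "\<dots> = snd a j"
      using True p by (simp add: nth_raw_df FIX_def)
    finally show ?thesis .
  next
    case False
    then show ?thesis
      using a by (cases a) (simp add: recolor_def arrangements_def)
  qed
  then show ?thesis
    by (simp add: prod_eq_iff fun_eq_iff)
qed

lemma fixcount_recolor:
  assumes "0 < i" "0 < t"
  shows "fixcount n (recolor n (- int (Suc i)) a) t =
    fixcount n a (Transposition.transpose i (Suc i) t)"
proof -
  have "Transposition.transpose (- int (Suc i)) (- int (Suc i) + 1) (- int t)
      = - int (Transposition.transpose i (Suc i) t)"
    by (auto simp: transpose_def)
  moreover have "0 < Transposition.transpose i (Suc i) t"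
    using assms by (auto simp: transpose_def)
  ultimately show ?thesis
    using assms by (simp add: fixcount_eq_count_list_raw_df raw_df_recolor count_list_letter_swap)
qed

lemma DEZ_recolor: "c + 1 < 0 \<Longrightarrow> DEZ n (recolor n c a) = DEZ n a"
  by (simp add: DEZ_eq_DES_raw_df raw_df_recolor DES_letter_swap)

lemma Der_recolor: "c + 1 < 0 \<Longrightarrow> Der n (recolor n c a) = Der n a"
  by (simp add: Der_eq_pos_red_Pos_raw_df raw_df_recolor Pos_def filter_letter_swap)

definition dez_der_equivalent :: "nat \<Rightarrow> nat \<Rightarrow> (nat \<Rightarrow> nat) \<Rightarrow> (nat \<Rightarrow> nat) \<Rightarrow> bool" where
  "dez_der_equivalent n k m m' \<longleftrightarrow> (\<exists>f. bij_betw f (arrangements_m n k m) (arrangements_m n k m')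
      \<and> (\<forall>a \<in> arrangements_m n k m. DEZ n (f a) = DEZ n a \<and> Der n (f a) = Der n a))"

lemma dez_der_equivalent_refl: "dez_der_equivalent n k m m"
  unfolding dez_der_equivalent_def by (intro exI[of _ id]) simp

lemma dez_der_equivalent_trans:
  assumes "dez_der_equivalent n k m m'" "dez_der_equivalent n k m' m''"
  shows "dez_der_equivalent n k m m''"
proof -
  obtain f where f: "bij_betw f (arrangements_m n k m) (arrangements_m n k m')"
    "\<forall>a \<in> arrangements_m n k m. DEZ n (f a) = DEZ n a \<and> Der n (f a) = Der n a"
    using assms(1) unfolding dez_der_equivalent_def by blast
  obtain g where g: "bij_betw g (arrangements_m n k m') (arrangements_m n k m'')"
    "\<forall>a \<in> arrangements_m n k m'. DEZ n (g a) = DEZ n a \<and> Der n (g a) = Der n a"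
    using assms(2) unfolding dez_der_equivalent_def by blast
  have "\<forall>a \<in> arrangements_m n k m. DEZ n (g (f a)) = DEZ n a \<and> Der n (g (f a)) = Der n a"
    using f g bij_betw_apply[OF f(1)] by simp
  then show ?thesis
    unfolding dez_der_equivalent_def using bij_betw_trans[OF f(1) g(1)] by auto
qed

lemma dez_der_equivalent_adjacent:
  assumes i: "0 < i" "i < k"
  shows "dez_der_equivalent n k m (m \<circ> Transposition.transpose i (Suc i))"
proof -
  define c where "c = - int (Suc i)"
  define s where "s = Transposition.transpose i (Suc i)"
  have c: "- int k \<le> c" "c + 1 < 0"
    using i by (auto simp: c_def)
  have maps_to: "recolor n c a \<in> arrangements_m n k (m' \<circ> s)"
    if "a \<in> arrangements_m n k m'" for a m'
  proof -
    have "s t \<in> {1..k}" if "t \<in> {1..k}" for t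
      using i that by (auto simp: s_def transpose_def)
    then show ?thesis
      using that recolor_in_arrangements[OF _ c] fixcount_recolor[OF i(1)]
      by (auto simp: arrangements_m_def c_def s_def)
  qed
  have "bij_betw (recolor n c) (arrangements_m n k m) (arrangements_m n k (m \<circ> s))"
  proof (rule bij_betw_byWitness[where f' = "recolor n c"])
    show "\<forall>a \<in> arrangements_m n k m. recolor n c (recolor n c a) = a"
      "\<forall>a \<in> arrangements_m n k (m \<circ> s). recolor n c (recolor n c a) = a"
      using recolor_recolor[OF _ c(2)] by (auto simp: arrangements_m_def)
    show "recolor n c ` arrangements_m n k m \<subseteq> arrangements_m n k (m \<circ> s)"
      using maps_to by blast
    show "recolor n c ` arrangements_m n k (m \<circ> s) \<subseteq> arrangements_m n k m"
      using maps_to[of _ "m \<circ> s"] by (simp add: s_def comp_assoc image_subset_iff)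
  qed
  then show ?thesis
    unfolding dez_der_equivalent_def s_def using DEZ_recolor[OF c(2)] Der_recolor[OF c(2)] by blast
qed

lemma dez_der_equivalent_adj_transps:
  "\<forall>x \<in> set xs. 0 < x \<and> x < k \<Longrightarrow> dez_der_equivalent n k m (m \<circ> apply_adj_transps xs)"
proof (induction xs arbitrary: m)
  case Nil
  then show ?case by (simp add: dez_der_equivalent_refl)
next
  case (Cons x xs)
  then show ?case
    using dez_der_equivalent_trans[OF dez_der_equivalent_adjacent Cons.IH]
    by (simp add: o_assoc)
qed

lemma dez_der_equivalent_transpose:
  assumes "a \<in> {1..k}" "b \<in> {1..k}"
  shows "dez_der_equivalent n k m (m \<circ> Transposition.transpose a b)"
proof -
  have ordered: "dez_der_equivalent n k m (m \<circ> Transposition.transpose a b)"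
    if "a \<in> {1..k}" "b \<in> {1..k}" "a < b" for a b
    using that dez_der_equivalent_adj_transps[of "adj_transp_seq a b" k n m]
    by (simp add: adj_transp_seq_correct set_adj_transp_seq)
  consider "a = b" | "a < b" | "b < a"
    by linarith
  then show ?thesis
  proof cases
    case 1
    then show ?thesis by (simp add: dez_der_equivalent_refl)
  next
    case 2
    then show ?thesis using ordered assms by blast
  next
    case 3
    then show ?thesis using ordered[of b a] assms by (simp add: transpose_commute)
  qed
qed

lemma dez_der_equivalent_permutes:
  assumes "\<tau> permutes {1..k}"
  shows "dez_der_equivalent n k m (m \<circ> \<tau>)"
  using assms finite_atLeastAtMost[of 1 k]
proof (induction arbitrary: m rule: permutes_induct)
  case id
  then show ?case by (simp add: dez_der_equivalent_refl)
next
  case (swap a b p)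
  then show ?case
    using dez_der_equivalent_trans[OF dez_der_equivalent_transpose swap.IH]
    by (simp add: o_assoc)
qed

theorem lemma2p2:
  fixes n k :: nat and m :: "nat \<Rightarrow> nat" and \<tau> :: "nat \<Rightarrow> nat"
  assumes "n \<ge> 1" and "k \<ge> 1" and "\<tau> permutes {1..k}"
  shows "\<exists>f. bij_betw f (arrangements_m n k m) (arrangements_m n k (\<lambda>i. m (\<tau> i)))
           \<and> (\<forall>a \<in> arrangements_m n k m. DEZ n (f a) = DEZ n a \<and> Der n (f a) = Der n a)"
  using dez_der_equivalent_permutes[OF assms(3), of n m]
  by (simp add: dez_der_equivalent_def comp_def)

end
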